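(* For every positive integer $n$, $\mathrm{Sort}_n(\mathrm{SC}_{\underline{23}1})=\mathrm{Av}_n(1324,\mu_{2413})$, the set of permutations in $\mathfrak S_n$ that avoid the classical pattern $1324$ and the mesh pattern $\mu_{2413}=(2413,\{(1,0),(2,1),(2,2)\})$.
   Context: $\mathfrak S_n$ is the set of permutations of $\{1,\dots,n\}$. A vincular pattern is a permutation with some entries underlined; a sequence contains it if it has a subsequence with the same relative order in which entries corresponding to adjacent underlined entries occupy consecutive positions. An occurrence of $\underline{23}1$ is $a_j a_{j+1} a_l$ with $l>j+1$ and $a_l<a_j<a_{j+1}$. A mesh pattern is a pair $(\sigma,A)$ with $\sigma\in\mathfrak S_k$ and $A\subseteq\{0,\dots,k\}^2$. A permutation $\tau\in\mathfrak S_n$ contains $(\sigma,A)$ if there are positions $i_1<\dots<i_k$ with $\tau_{i_1}\cdots\tau_{i_k}$ order-isomorphic to $\sigma$ such that, writing $i_0=0$, $i_{k+1}=n+1$, and $v_0=0<v_1<\dots<v_k<v_{k+1}=n+1$ for the sorted values $\{\tau_{i_1},\dots,\tau_{i_k}\}$ together with $0,n+1$, no point $(j,\tau_j)$ lies in the open box $i_a<j<i_{a+1}$, $v_b<\tau_j<v_{b+1}$ for any $(a,b)\in A$. Otherwise $\tau$ avoids it. For a pattern $\sigma$, the map $\mathrm{SC}_\sigma$ acts on $\tau$: read entries left to right; when the next entry $x$ is read, if pushing $x$ yields a stack whose entries read top to bottom (stack adjacency = consecutive positions) avoid $\sigma$, push $x$; otherwise pop the top stack entry to the output and repeat. At the end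 pop all remaining entries; the output is $\mathrm{SC}_\sigma(\tau)$. West's stack-sorting map is $s=\mathrm{SC}_{21}$. $\mathrm{Sort}_n(\mathrm{SC}_\sigma)=\{\tau\in\mathfrak S_n : s(\mathrm{SC}_\sigma(\tau))=12\cdots n\}$. *)

theory Defs
  imports Main
begin

definition perms :: "nat \<Rightarrow> nat list set" where
  "perms n = {xs. distinct xs \<and> set xs = {1..n}}"

definition occurrence :: "nat list \<Rightarrow> nat list \<Rightarrow> nat list \<Rightarrow> bool" where
  "occurrence sigma tau idx \<longleftrightarrow>
     sorted_wrt (<) idx \<and> length idx = length sigma \<and>
     (\<forall>i\<in>set idx. i < length tau) \<and>
     (\<forall>a < length sigma. \<forall>b < length sigma.
        (tau ! (idx ! a) < tau ! (idx ! b)) \<longleftrightarrow> (sigma ! a < sigma ! b))"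

definition contains :: "nat list \<Rightarrow> nat list \<Rightarrow> bool" where
  "contains sigma tau \<longleftrightarrow> (\<exists>idx. occurrence sigma tau idx)"

text \<open>Vincular pattern 23-1 with 2,3 underlined (adjacent): a_j a_{j+1} a_l, l > j+1,
  a_l < a_j < a_{j+1}.\<close>
definition contains_23_1 :: "nat list \<Rightarrow> bool" where
  "contains_23_1 s \<longleftrightarrow>
     (\<exists>j l. j + 1 < l \<and> l < length s \<and> s ! l < s ! j \<and> s ! j < s ! (j + 1))"

text \<open>Mesh pattern containment, with 1-based positions/values as in the paper:
  I a = i_a (i_0 = 0, i_{k+1} = n+1), V b = v_b (v_0 = 0, v_{k+1} = n+1).\<close>
definition mesh_contains :: "nat list \<Rightarrow> (nat \<times> nat) set \<Rightarrow> nat list \<Rightarrow> bool" where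
  "mesh_contains sigma A tau \<longleftrightarrow>
     (\<exists>idx. occurrence sigma tau idx \<and>
        (let k = length sigma; n = length tau;
             I = (\<lambda>a. if a = 0 then 0 else if a \<le> k then idx ! (a - 1) + 1 else n + 1);
             vs = sort (map (\<lambda>i. tau ! i) idx);
             V = (\<lambda>b. if b = 0 then 0 else if b \<le> k then vs ! (b - 1) else n + 1)
         in \<forall>(a, b)\<in>A. \<not> (\<exists>j. 1 \<le> j \<and> j \<le> n \<and> I a < j \<and> j < I (a + 1) \<and>
                                V b < tau ! (j - 1) \<and> tau ! (j - 1) < V (b + 1))))"

text \<open>The stack is a list whose head is the top, so
  the stack read top to bottom is the list itself.\<close>
fun sc_insert :: "(nat list \<Rightarrow> bool) \<Rightarrow> nat \<Rightarrow> nat list \<Rightarrow> nat list \<Rightarrow> nat list \<times> nat list" where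
  "sc_insert P x [] out = ([x], out)"
| "sc_insert P x (y # st) out =
     (if \<not> P (x # y # st) then (x # y # st, out) else sc_insert P x st (out @ [y]))"

fun sc_run :: "(nat list \<Rightarrow> bool) \<Rightarrow> nat list \<Rightarrow> nat list \<Rightarrow> nat list \<Rightarrow> nat list" where
  "sc_run P [] st out = out @ st"
| "sc_run P (x # xs) st out = (case sc_insert P x st out of (st', out') \<Rightarrow> sc_run P xs st' out')"

definition SC :: "(nat list \<Rightarrow> bool) \<Rightarrow> nat list \<Rightarrow> nat list" where
  "SC P tau = sc_run P tau [] []"

definition west_s :: "nat list \<Rightarrow> nat list" where
  "west_s = SC (contains [2, 1])"

definition Sort_SC :: "nat \<Rightarrow> (nat list \<Rightarrow> bool) \<Rightarrow> nat list set" where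
  "Sort_SC n P = {tau \<in> perms n. west_s (SC P tau) = [1..<n + 1]}"

end

theory Submission
  imports Defs
begin

(* A run of a pattern-avoiding stack machine on tau is determined by pop times:
  position p leaves the stack while the entry at position T p is being inserted (T p = n for
  the final flush), and positions popped at the same time leave latest first; the output lists
  the positions by increasing pop time. For SC_{23-1}, p is popped by its next smaller entry,
  unless that entry is a left-to-right minimum, in which case p is never popped; for West's
  map s = SC_21, p is popped by its next greater entry. With the latter description one gets
  West's theorem: s sorts a permutation iff it avoids 231. Hence tau is sorted by s o SC_{23-1}
  iff no three positions of tau leave the SC_{23-1} stack in an order that produces a 231, and a
  case analysis on their pop times shows that such positions exist iff tau contains 1324 or
  the mesh pattern (2413, {(1,0),(2,1),(2,2)}). *)

lemma occurrence_length: "occurrence sigma s idx \<Longrightarrow> length idx = length sigma"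
  unfolding occurrence_def by simp

lemma length_eq_small_conv:
  "length xs = 2 \<longleftrightarrow> (\<exists>a b. xs = [a, b])"
  "length xs = 3 \<longleftrightarrow> (\<exists>a b c. xs = [a, b, c])"
  "length xs = 4 \<longleftrightarrow> (\<exists>a b c d. xs = [a, b, c, d])"
  by (auto simp: length_Suc_conv numeral_eq_Suc)

lemma contains_conv:
  "contains [a, b] s \<longleftrightarrow> (\<exists>i j. occurrence [a, b] s [i, j])"
  "contains [a, b, c] s \<longleftrightarrow> (\<exists>i j k. occurrence [a, b, c] s [i, j, k])"
  "contains [a, b, c, d] s \<longleftrightarrow> (\<exists>i j k l. occurrence [a, b, c, d] s [i, j, k, l])"
  unfolding contains_def by (metis length_eq_small_conv list.size(3,4) occurrence_length)+

lemma occurrence_21: "occurrence [2, 1] s [i, j] \<longleftrightarrow> i < j \<and> j < length s \<and> s!j < s!i"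
  unfolding occurrence_def by (auto simp: All_less_Suc numeral_eq_Suc)

lemma occurrence_231:
  "occurrence [2, 3, 1] s [i, j, k] \<longleftrightarrow> i < j \<and> j < k \<and> k < length s \<and> s!k < s!i \<and> s!i < s!j"
  unfolding occurrence_def by (auto simp: All_less_Suc numeral_eq_Suc)

lemma occurrence_1324:
  "occurrence [1, 3, 2, 4] s [i, j, k, l] \<longleftrightarrow>
     i < j \<and> j < k \<and> k < l \<and> l < length s \<and> s!i < s!k \<and> s!k < s!j \<and> s!j < s!l"
  unfolding occurrence_def by (auto simp: All_less_Suc numeral_eq_Suc)

lemma occurrence_2413:
  "occurrence [2, 4, 1, 3] s [i, j, k, l] \<longleftrightarrow>
     i < j \<and> j < k \<and> k < l \<and> l < length s \<and> s!k < s!i \<and> s!i < s!l \<and> s!l < s!j"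
  unfolding occurrence_def by (auto simp: All_less_Suc numeral_eq_Suc)

lemma contains_21_iff: "contains [2, 1] s \<longleftrightarrow> (\<exists>i j. i < j \<and> j < length s \<and> s!j < s!i)"
  unfolding contains_conv occurrence_21 ..

lemma contains_231_iff:
  "contains [2, 3, 1] s \<longleftrightarrow> (\<exists>i j k. i < j \<and> j < k \<and> k < length s \<and> s!k < s!i \<and> s!i < s!j)"
  unfolding contains_conv occurrence_231 ..

lemma contains_1324_iff:
  "contains [1, 3, 2, 4] s \<longleftrightarrow> (\<exists>i j k l. i < j \<and> j < k \<and> k < l \<and> l < length s \<and>
     s!i < s!k \<and> s!k < s!j \<and> s!j < s!l)"
  unfolding contains_conv occurrence_1324 ..

lemma ex_occurrence_4_conv:
  "length sigma = 4 \<Longrightarrow> (\<exists>idx. occurrence sigma s idx \<and> Q idx) \<longleftrightarrow>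
     (\<exists>i j k l. occurrence sigma s [i, j, k, l] \<and> Q [i, j, k, l])"
  by (metis length_eq_small_conv(3) occurrence_length)

definition mesh_2413_occurrence :: "nat list \<Rightarrow> nat \<Rightarrow> nat \<Rightarrow> nat \<Rightarrow> nat \<Rightarrow> bool" where
  "mesh_2413_occurrence s i j k l \<longleftrightarrow> occurrence [2, 4, 1, 3] s [i, j, k, l] \<and>
     (\<forall>p. i < p \<and> p < j \<longrightarrow> s!k < s!p) \<and> (\<forall>p. j < p \<and> p < k \<longrightarrow> s!p < s!k \<or> s!l < s!p)"

lemma mesh_contains_2413_iff:
  assumes "distinct s" and "0 \<notin> set s"
  shows "mesh_contains [2, 4, 1, 3] {(1, 0), (2, 1), (2, 2)} s \<longleftrightarrow>
    (\<exists>i j k l. mesh_2413_occurrence s i j k l)"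
  unfolding mesh_contains_def mesh_2413_occurrence_def
proof (subst ex_occurrence_4_conv, simp, intro ex_cong1 conj_cong refl, goal_cases)
  case (1 i j k l)
  then have ord: "i < j" "j < k" "k < l" "l < length s" "s!k < s!i" "s!i < s!l" "s!l < s!j"
    unfolding occurrence_2413 by auto
  then have "sort [s!i, s!j, s!k, s!l] = [s!k, s!i, s!l, s!j]" by simp
  moreover have "0 < s!p" if "p < length s" for p
    using assms(2) that by (metis gr0I nth_mem)
  moreover have "s!p \<noteq> s!q" if "p < length s" "q < length s" "p \<noteq> q" for p q
    using assms(1) that by (simp add: nth_eq_iff_index_eq)
  \<comment> \<open>the boxes of \<open>mesh_contains\<close> use 1-based positions, hence the shifts by one below\<close>
  ultimately show ?case using ord
    apply (simp add: Let_def numeral_eq_Suc)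
    apply safe
    subgoal for p by (drule spec[of _ "Suc p"], simp) (metis less_trans nat_neq_iff)
    subgoal for p by (drule spec[of _ "Suc p"])+ (simp, metis less_trans nat_neq_iff)
    subgoal for q by (auto dest!: spec[of _ "q - 1"])
    subgoal for q by (auto dest!: spec[of _ "q - 1"])
    subgoal for q by (auto dest!: spec[of _ "q - 1"])
    done
qed

lemma contains_23_1_conv:
  "contains_23_1 s \<longleftrightarrow> (\<exists>j<length s. \<exists>l<length s. j + 1 < l \<and> s!l < s!j \<and> s!j < s!(j + 1))"
proof -
  have "j < length s" if "j + 1 < l" "l < length s" for j l
    using that by simp
  then show ?thesis unfolding contains_23_1_def by blast
qed

lemma contains_23_1_Cons:
  "contains_23_1 (x # s) \<longleftrightarrow> contains_23_1 s \<or> (\<exists>y r. s = y # r \<and> x < y \<and> (\<exists>z\<in>set r. z < x))"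
  unfolding contains_23_1_conv
  by (cases s) (auto simp: Ex_less_Suc2 dest: in_set_conv_nth[THEN iffD1] intro: nth_mem)

lemma contains_21_Cons: "contains [2, 1] (x # s) \<longleftrightarrow> contains [2, 1] s \<or> (\<exists>z\<in>set s. z < x)"
proof -
  have "contains [2, 1] s \<longleftrightarrow> (\<exists>i<length s. \<exists>j<length s. i < j \<and> s!j < s!i)" for s
    unfolding contains_21_iff by (meson less_trans)
  then show ?thesis
    by (auto simp: Ex_less_Suc2 dest: in_set_conv_nth[THEN iffD1] intro: nth_mem)
qed

lemma sc_insert_avoids: "(\<And>y. \<not> P [y]) \<Longrightarrow> \<not> P (fst (sc_insert P x st out))"
  by (induction P x st out rule: sc_insert.induct) auto

lemma sc_insert_23_1:
  "\<not> contains_23_1 st \<Longrightarrow> sc_insert contains_23_1 x st out =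
     (if \<exists>z\<in>set st. z < x
      then (x # dropWhile (\<lambda>y. x < y) st, out @ takeWhile (\<lambda>y. x < y) st)
      else (x # st, out))"
proof (induction st arbitrary: out)
  case (Cons y st)
  then have "\<not> contains_23_1 st" and "contains_23_1 (x # y # st) \<longleftrightarrow> x < y \<and> (\<exists>z\<in>set st. z < x)"
    using contains_23_1_Cons[of y st] contains_23_1_Cons[of x "y # st"] by auto
  then show ?case using Cons.IH by auto
qed simp

lemma sc_insert_21:
  "\<not> contains [2, 1] st \<Longrightarrow> sc_insert (contains [2, 1]) x st out =
     (x # dropWhile (\<lambda>y. y < x) st, out @ takeWhile (\<lambda>y. y < x) st)"
proof (induction st arbitrary: out)
  case (Cons y st)
  then have "\<not> contains [2, 1] st" and "\<forall>z\<in>set st. y \<le> z"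
    using contains_21_Cons[of y st] by auto
  moreover have "contains [2, 1] (x # y # st) \<longleftrightarrow> y < x"
    using Cons.prems calculation(2) contains_21_Cons[of x "y # st"] by auto
  ultimately show ?case using Cons.IH by auto
qed simp

section \<open>Runs described by pop times\<close>

definition popped_positions :: "(nat \<Rightarrow> nat) \<Rightarrow> nat \<Rightarrow> nat list" where
  "popped_positions T t = rev (filter (\<lambda>p. T p = t) [0..<t])"

definition stack_at :: "nat list \<Rightarrow> (nat \<Rightarrow> nat) \<Rightarrow> nat \<Rightarrow> nat list" where
  "stack_at tau T t = map ((!) tau) (rev (filter (\<lambda>p. t \<le> T p) [0..<t]))"

definition pop_order :: "(nat \<Rightarrow> nat) \<Rightarrow> nat \<Rightarrow> nat list" where
  "pop_order T m = concat (map (popped_positions T) [0..<m])"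

definition pops_before :: "(nat \<Rightarrow> nat) \<Rightarrow> nat \<Rightarrow> nat \<Rightarrow> bool" where
  "pops_before T p q \<longleftrightarrow> T p < T q \<or> (T p = T q \<and> q < p)"

lemma pops_before_asym: "pops_before T p q \<Longrightarrow> \<not> pops_before T q p"
  unfolding pops_before_def by auto

lemma set_stack_at: "set (stack_at tau T t) = {tau!q | q. q < t \<and> t \<le> T q}"
  unfolding stack_at_def by auto

lemma takeWhile_dropWhile_sorted_desc:
  fixes xs :: "'a::linorder list"
  assumes "sorted_wrt (>) xs"
    and "\<And>x. x \<in> set xs \<Longrightarrow> R x \<longleftrightarrow> (\<forall>y\<in>set xs. x \<le> y \<longrightarrow> Q y)"
  shows "takeWhile Q xs = filter R xs \<and> dropWhile Q xs = filter (\<lambda>x. \<not> R x) xs"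
  using assms
proof (induction xs)
  case (Cons a xs)
  have "\<forall>y\<in>set xs. y < a"
    using Cons.prems(1) by simp
  then have "(\<forall>y\<in>set (a # xs). a \<le> y \<longrightarrow> Q y) \<longleftrightarrow> Q a"
    by (auto dest: leD)
  then have "R a \<longleftrightarrow> Q a"
    using Cons.prems(2)[of a] by simp
  show ?case
  proof (cases "Q a")
    case True
    then have "R x \<longleftrightarrow> (\<forall>y\<in>set xs. x \<le> y \<longrightarrow> Q y)" if "x \<in> set xs" for x
      using Cons.prems(2)[of x] that by auto
    then show ?thesis
      using Cons True \<open>R a \<longleftrightarrow> Q a\<close> by simp
  next
    case False
    then have "\<not> R x" if "x \<in> set xs" for x
      using Cons.prems(2)[of x] that \<open>\<forall>y\<in>set xs. y < a\<close> by auto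
    then show ?thesis
      using False \<open>R a \<longleftrightarrow> Q a\<close> by simp
  qed
qed simp

lemma stack_at_step:
  assumes "t < T t"
    and pops: "\<And>p. p < t \<Longrightarrow> t \<le> T p \<Longrightarrow>
      T p = t \<longleftrightarrow> (\<forall>q. p \<le> q \<and> q < t \<and> t \<le> T q \<longrightarrow> Q (tau!q))"
  shows "takeWhile Q (stack_at tau T t) = map ((!) tau) (popped_positions T t)"
    and "tau!t # dropWhile Q (stack_at tau T t) = stack_at tau T (Suc t)"
proof -
  let ?L = "rev (filter (\<lambda>p. t \<le> T p) [0..<t])"
  have set_L: "set ?L = {p. p < t \<and> t \<le> T p}"
    by auto
  have "sorted_wrt (>) ?L"
    unfolding sorted_wrt_rev by (rule sorted_wrt_filter) simp
  moreover have "T p = t \<longleftrightarrow> (\<forall>q\<in>set ?L. p \<le> q \<longrightarrow> (Q \<circ> (!) tau) q)" if "p \<in> set ?L" for p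
    using pops that unfolding set_L by auto
  ultimately have "takeWhile (Q \<circ> (!) tau) ?L = filter (\<lambda>p. T p = t) ?L"
    and "dropWhile (Q \<circ> (!) tau) ?L = filter (\<lambda>p. T p \<noteq> t) ?L"
    using takeWhile_dropWhile_sorted_desc[of ?L "\<lambda>p. T p = t"] by blast+
  moreover have "filter (\<lambda>p. T p = t) ?L = popped_positions T t"
    unfolding popped_positions_def by (simp add: rev_filter[symmetric] filter_filter) (metis order_refl)
  moreover have "filter (\<lambda>p. T p \<noteq> t) ?L = rev (filter (\<lambda>p. Suc t \<le> T p) [0..<t])"
    by (simp add: rev_filter[symmetric] filter_filter) (intro filter_cong; auto)
  moreover have "stack_at tau T (Suc t) = tau!t # map ((!) tau) (rev (filter (\<lambda>p. Suc t \<le> T p) [0..<t]))"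
    unfolding stack_at_def using assms(1) by simp
  ultimately show "takeWhile Q (stack_at tau T t) = map ((!) tau) (popped_positions T t)"
    and "tau!t # dropWhile Q (stack_at tau T t) = stack_at tau T (Suc t)"
    unfolding stack_at_def takeWhile_map dropWhile_map by simp_all
qed

lemma SC_eq_map_pop_order:
  assumes "\<not> P []" and "\<And>y. \<not> P [y]"
    and bounds: "\<And>p. p < length tau \<Longrightarrow> p < T p \<and> T p \<le> length tau"
    and step: "\<And>t out. t < length tau \<Longrightarrow> \<not> P (stack_at tau T t) \<Longrightarrow>
      sc_insert P (tau!t) (stack_at tau T t) out =
        (stack_at tau T (Suc t), out @ map ((!) tau) (popped_positions T t))"
  shows "SC P tau = map ((!) tau) (pop_order T (Suc (length tau)))"
proof -
  let ?n = "length tau" and ?out = "\<lambda>t. map ((!) tau) (pop_order T t)"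
  have "sc_run P (drop t tau) (stack_at tau T t) (?out t) = ?out (Suc ?n)"
    if "t \<le> ?n" and "\<not> P (stack_at tau T t)" for t
    using that
  proof (induction "?n - t" arbitrary: t)
    case 0
    have "filter (\<lambda>p. ?n \<le> T p) [0..<?n] = filter (\<lambda>p. T p = ?n) [0..<?n]"
      using bounds by (intro filter_cong) (auto intro: le_antisym)
    then have "stack_at tau T ?n = map ((!) tau) (popped_positions T ?n)"
      unfolding stack_at_def popped_positions_def by simp
    then show ?case using 0 unfolding pop_order_def by simp
  next
    case (Suc k)
    then have t: "t < ?n" by simp
    have ins: "sc_insert P (tau!t) (stack_at tau T t) (?out t) = (stack_at tau T (Suc t), ?out (Suc t))"
      using step[OF t Suc.prems(2)] unfolding pop_order_def by simp
    then have "\<not> P (stack_at tau T (Suc t))"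
      using sc_insert_avoids[of P] assms(2) by (metis fst_conv)
    then have "sc_run P (drop (Suc t) tau) (stack_at tau T (Suc t)) (?out (Suc t)) = ?out (Suc ?n)"
      using Suc.hyps t by simp
    moreover have "drop t tau = tau!t # drop (Suc t) tau"
      using t by (simp add: Cons_nth_drop_Suc)
    ultimately show ?case
      using ins by simp
  qed
  from this[of 0] show ?thesis
    using assms(1) unfolding SC_def by (simp add: stack_at_def pop_order_def)
qed

lemma pop_order_props:
  "distinct (pop_order T m) \<and> set (pop_order T m) = {p. p < T p \<and> T p < m} \<and>
   sorted_wrt (pops_before T) (pop_order T m)"
proof (induction m)
  case (Suc m)
  let ?new = "popped_positions T m"
  have "pop_order T (Suc m) = pop_order T m @ ?new"
    unfolding pop_order_def by simp
  moreover have new: "set ?new = {p. p < m \<and> T p = m}"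
    unfolding popped_positions_def by auto
  moreover have "sorted_wrt (pops_before T) ?new"
    unfolding popped_positions_def sorted_wrt_rev
    by (rule sorted_wrt_filter[THEN sorted_wrt_mono_rel[rotated]]) (auto simp: pops_before_def)
  moreover have "distinct ?new"
    unfolding popped_positions_def by simp
  moreover have "\<forall>p\<in>set (pop_order T m). \<forall>q\<in>set ?new. pops_before T p q"
    using Suc.IH new by (simp add: pops_before_def)
  moreover have "{p. p < T p \<and> T p < m} \<union> {p. p < m \<and> T p = m} = {p. p < T p \<and> T p < Suc m}"
    by auto
  ultimately show ?case
    using Suc.IH by (auto simp: sorted_wrt_append)
qed (simp add: pop_order_def)

lemma set_pop_order_complete:
  assumes "\<And>p. p < n \<Longrightarrow> p < T p \<and> T p \<le> n"
  shows "set (pop_order T (Suc n)) = {0..<n}"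
  using pop_order_props[of T "Suc n"] assms by force

lemma sorted_wrt_nth_less_iff:
  assumes "sorted_wrt R xs" and "\<And>x y. R x y \<Longrightarrow> \<not> R y x"
    and "i < length xs" and "j < length xs"
  shows "R (xs!i) (xs!j) \<longleftrightarrow> i < j"
  using assms sorted_wrt_iff_nth_less by (metis linorder_neqE_nat)

lemma sorted_map_iff_rel:
  assumes sorted: "sorted_wrt R xs" and asym: "\<And>x y. R x y \<Longrightarrow> \<not> R y x"
  shows "sorted_wrt (<) (map f xs) \<longleftrightarrow> (\<forall>p\<in>set xs. \<forall>q\<in>set xs. R p q \<longrightarrow> f p < f q)"
proof
  assume fs: "sorted_wrt (<) (map f xs)"
  show "\<forall>p\<in>set xs. \<forall>q\<in>set xs. R p q \<longrightarrow> f p < f q"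
  proof (intro ballI impI)
    fix p q assume "p \<in> set xs" "q \<in> set xs" "R p q"
    then obtain i j where "i < length xs" "j < length xs" "xs!i = p" "xs!j = q"
      by (auto simp: in_set_conv_nth)
    with \<open>R p q\<close> have "i < j" using sorted_wrt_nth_less_iff[OF sorted asym] by blast
    with fs have "f (xs!i) < f (xs!j)"
      using \<open>j < length xs\<close> by (simp add: sorted_wrt_iff_nth_less)
    then show "f p < f q"
      using \<open>xs!i = p\<close> \<open>xs!j = q\<close> by simp
  qed
next
  assume "\<forall>p\<in>set xs. \<forall>q\<in>set xs. R p q \<longrightarrow> f p < f q"
  then have "sorted_wrt (\<lambda>p q. f p < f q) xs"
    by (intro sorted_wrt_mono_rel[OF _ sorted]) blast
  then show "sorted_wrt (<) (map f xs)"
    unfolding sorted_wrt_map .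
qed

lemma contains_231_map_iff:
  assumes sorted: "sorted_wrt R xs" and asym: "\<And>x y. R x y \<Longrightarrow> \<not> R y x"
  shows "contains [2, 3, 1] (map f xs) \<longleftrightarrow>
    (\<exists>a\<in>set xs. \<exists>b\<in>set xs. \<exists>c\<in>set xs. R b c \<and> R c a \<and> f a < f b \<and> f b < f c)"
proof
  assume "contains [2, 3, 1] (map f xs)"
  then obtain i j k where "i < j" "j < k" "k < length xs"
    and "f (xs!k) < f (xs!i)" "f (xs!i) < f (xs!j)"
    unfolding contains_231_iff by auto
  moreover have "R (xs!i) (xs!j)" "R (xs!j) (xs!k)"
    using sorted_wrt_nth_less_iff[OF sorted asym, of i j] sorted_wrt_nth_less_iff[OF sorted asym, of j k]
      calculation by simp_all
  moreover have "xs!i \<in> set xs" "xs!j \<in> set xs" "xs!k \<in> set xs"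
    using calculation by auto
  ultimately show "\<exists>a\<in>set xs. \<exists>b\<in>set xs. \<exists>c\<in>set xs. R b c \<and> R c a \<and> f a < f b \<and> f b < f c"
    by blast
next
  assume "\<exists>a\<in>set xs. \<exists>b\<in>set xs. \<exists>c\<in>set xs. R b c \<and> R c a \<and> f a < f b \<and> f b < f c"
  then obtain a b c where "a \<in> set xs" "b \<in> set xs" "c \<in> set xs"
    and "R b c" "R c a" "f a < f b" "f b < f c"
    by blast
  then obtain i j k where "i < length xs" "j < length xs" "k < length xs"
    and "xs!i = b" "xs!j = c" "xs!k = a"
    by (metis in_set_conv_nth)
  with \<open>R b c\<close> \<open>R c a\<close> \<open>f a < f b\<close> \<open>f b < f c\<close>
  have "i < length xs" "j < length xs" "k < length xs"
    and "R (xs!i) (xs!j)" "R (xs!j) (xs!k)" "f (xs!k) < f (xs!i)" "f (xs!i) < f (xs!j)"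
    by simp_all
  moreover have "i < j" "j < k"
    using sorted_wrt_nth_less_iff[OF sorted asym, of i j] sorted_wrt_nth_less_iff[OF sorted asym, of j k]
      calculation by simp_all
  ultimately show "contains [2, 3, 1] (map f xs)"
    unfolding contains_231_iff by (intro exI[of _ i] exI[of _ j] exI[of _ k]) simp
qed

definition first_after :: "nat \<Rightarrow> (nat \<Rightarrow> bool) \<Rightarrow> nat \<Rightarrow> nat" where
  "first_after n P p = (LEAST t. t = n \<or> p < t \<and> P t)"

lemma first_after_le: "first_after n P p \<le> n"
  unfolding first_after_def by (rule Least_le) simp

lemma first_after_cases: "first_after n P p = n \<or> p < first_after n P p \<and> P (first_after n P p)"
  unfolding first_after_def by (rule LeastI[of _ n]) simp

lemma first_after_gt: "p < n \<Longrightarrow> p < first_after n P p"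
  using first_after_cases[of n P p] by auto

lemma first_after_minimal: "p < r \<Longrightarrow> r < first_after n P p \<Longrightarrow> \<not> P r"
  unfolding first_after_def using not_less_Least by blast

lemma first_after_le_witness: "p < r \<Longrightarrow> P r \<Longrightarrow> first_after n P p \<le> r"
  unfolding first_after_def by (rule Least_le) simp

lemma first_after_eqI:
  assumes "p < t" "t \<le> n" "t < n \<Longrightarrow> P t" "\<And>r. p < r \<Longrightarrow> r < t \<Longrightarrow> \<not> P r"
  shows "first_after n P p = t"
  unfolding first_after_def
proof (rule Least_equality)
  show "t = n \<or> p < t \<and> P t"
    using assms(1-3) by (cases "t < n") auto
  show "t \<le> r" if "r = n \<or> p < r \<and> P r" for r
    using that assms(2,4) by (meson not_le)
qed

definition next_smaller :: "nat list \<Rightarrow> nat \<Rightarrow> nat" where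
  "next_smaller tau p = first_after (length tau) (\<lambda>t. tau!t < tau!p) p"

definition next_greater :: "nat list \<Rightarrow> nat \<Rightarrow> nat" where
  "next_greater tau p = first_after (length tau) (\<lambda>t. tau!p < tau!t) p"

lemma distinct_nth_neq:
  "distinct tau \<Longrightarrow> p < length tau \<Longrightarrow> q < length tau \<Longrightarrow> p \<noteq> q \<Longrightarrow> tau!p \<noteq> tau!q"
  by (simp add: nth_eq_iff_index_eq)

lemma next_smaller_less:
  "next_smaller tau p < length tau \<Longrightarrow> p < next_smaller tau p \<and> tau!(next_smaller tau p) < tau!p"
  unfolding next_smaller_def using first_after_cases by (metis nat_neq_iff)

lemma next_smaller_le: "p < q \<Longrightarrow> tau!q < tau!p \<Longrightarrow> next_smaller tau p \<le> q"
  unfolding next_smaller_def by (rule first_after_le_witness)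

lemma next_smaller_between:
  assumes "distinct tau" "p < r" "r < next_smaller tau p"
  shows "tau!p < tau!r"
proof -
  have "r < length tau"
    using assms(3) first_after_le[of "length tau"] unfolding next_smaller_def by (meson less_le_trans)
  then show ?thesis
    using assms first_after_minimal distinct_nth_neq[OF assms(1), of p r] unfolding next_smaller_def
    by (metis less_trans nat_neq_iff)
qed

lemma next_greater_bounds: "p < length tau \<Longrightarrow> p < next_greater tau p \<and> next_greater tau p \<le> length tau"
  unfolding next_greater_def using first_after_gt first_after_le by blast

lemma next_greater_less:
  "next_greater tau p < length tau \<Longrightarrow> p < next_greater tau p \<and> tau!p < tau!(next_greater tau p)"
  unfolding next_greater_def using first_after_cases by (metis nat_neq_iff)

lemma next_greater_le: "p < q \<Longrightarrow> tau!p < tau!q \<Longrightarrow> next_greater tau p \<le> q"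
  unfolding next_greater_def by (rule first_after_le_witness)

lemma next_greater_between:
  assumes "distinct tau" "p < r" "r < next_greater tau p"
  shows "tau!r < tau!p"
proof -
  have "r < length tau"
    using assms(3) first_after_le[of "length tau"] unfolding next_greater_def by (meson less_le_trans)
  then show ?thesis
    using assms first_after_minimal distinct_nth_neq[OF assms(1), of p r] unfolding next_greater_def
    by (metis less_trans nat_neq_iff)
qed

definition lr_min :: "nat list \<Rightarrow> nat \<Rightarrow> bool" where
  "lr_min tau p \<longleftrightarrow> (\<forall>q<p. tau!p < tau!q)"

lemma not_lr_min_witness:
  assumes "distinct tau" "t < length tau" "\<not> lr_min tau t"
  obtains e where "e < t" "tau!e < tau!t"
  using assms distinct_nth_neq[OF assms(1), of _ t] unfolding lr_min_def
  by (metis le_less_trans less_imp_le_nat not_less_iff_gr_or_eq)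

lemma prefix_min_lr_min:
  "0 < j \<Longrightarrow> j \<le> length tau \<Longrightarrow> \<exists>i<j. lr_min tau i \<and> (\<forall>p<j. tau!i \<le> tau!p)"
proof (induction j)
  case (Suc j)
  show ?case
  proof (cases "j = 0")
    case False
    then obtain i where i: "i < j" "lr_min tau i" "\<forall>p<j. tau!i \<le> tau!p"
      using Suc by auto
    show ?thesis
    proof (cases "tau!j < tau!i")
      case True
      then have "lr_min tau j"
        unfolding lr_min_def using i(3) by (auto intro: less_le_trans)
      then show ?thesis
        using i True by (intro exI[of _ j]) (auto simp: less_Suc_eq)
    qed (use i in \<open>auto simp: less_Suc_eq intro!: exI[of _ i]\<close>)
  qed (auto simp: lr_min_def)
qed simp

section \<open>The pop times of the 23-1 machine\<close>

(* The entry at p stays on the stack until its next smaller entry t arrives. If t is a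
  left-to-right minimum, no stack entry is smaller than it, so t is pushed without popping and
  p stays below it for good; otherwise the prefix minimum lies on the stack and t pops p. *)
definition pop_time_23_1 :: "nat list \<Rightarrow> nat \<Rightarrow> nat" where
  "pop_time_23_1 tau p =
     (let t = next_smaller tau p in if t < length tau \<and> \<not> lr_min tau t then t else length tau)"

lemma pop_time_23_1_bounds: "p < length tau \<Longrightarrow> p < pop_time_23_1 tau p \<and> pop_time_23_1 tau p \<le> length tau"
  unfolding pop_time_23_1_def next_smaller_def Let_def using first_after_gt by auto

lemma pop_time_23_1_less:
  "pop_time_23_1 tau p < length tau \<Longrightarrow>
     next_smaller tau p = pop_time_23_1 tau p \<and> \<not> lr_min tau (pop_time_23_1 tau p)"
  unfolding pop_time_23_1_def Let_def by (auto split: if_splits)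

lemma pop_time_23_1_eqI:
  "next_smaller tau p = t \<Longrightarrow> t < length tau \<Longrightarrow> \<not> lr_min tau t \<Longrightarrow> pop_time_23_1 tau p = t"
  unfolding pop_time_23_1_def by simp

lemma pop_time_23_1_lr_min:
  assumes "distinct tau" and "lr_min tau p"
  shows "pop_time_23_1 tau p = length tau"
proof (rule ccontr)
  let ?t = "next_smaller tau p"
  assume "pop_time_23_1 tau p \<noteq> length tau"
  then have t: "?t < length tau" "\<not> lr_min tau ?t"
    unfolding pop_time_23_1_def Let_def by (auto split: if_splits)
  then have "p < ?t" "tau!?t < tau!p"
    using next_smaller_less by blast+
  moreover have "tau!p < tau!q" if "p < q" "q < ?t" for q
    using next_smaller_between[OF assms(1) that] .
  ultimately have "lr_min tau ?t"
    using assms(2) unfolding lr_min_def by (metis less_trans linorder_neqE_nat)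
  with t show False by simp
qed

lemma pop_time_23_1_eq_iff:
  assumes dist: "distinct tau" and t: "t < length tau"
    and q0: "q0 < t" "t \<le> pop_time_23_1 tau q0" "tau!q0 < tau!t"
    and p: "p < t" "t \<le> pop_time_23_1 tau p"
  shows "pop_time_23_1 tau p = t \<longleftrightarrow>
    (\<forall>q. p \<le> q \<and> q < t \<and> t \<le> pop_time_23_1 tau q \<longrightarrow> tau!t < tau!q)"
proof
  assume "pop_time_23_1 tau p = t"
  then have ns: "next_smaller tau p = t"
    using pop_time_23_1_less t by metis
  then have "tau!t < tau!p"
    using next_smaller_less[of tau p] t by simp
  moreover have "tau!p < tau!q" if "p < q" "q < t" for q
    using next_smaller_between[OF dist that(1)] that(2) ns by simp
  ultimately show "\<forall>q. p \<le> q \<and> q < t \<and> t \<le> pop_time_23_1 tau q \<longrightarrow> tau!t < tau!q"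
    by (metis le_neq_implies_less less_trans)
next
  assume H: "\<forall>q. p \<le> q \<and> q < t \<and> t \<le> pop_time_23_1 tau q \<longrightarrow> tau!t < tau!q"
  let ?s = "next_smaller tau p"
  have "tau!t < tau!p"
    using H p by auto
  have between: "\<not> tau!r < tau!p" if "p < r" "r < t" for r
  proof
    assume "tau!r < tau!p"
    with that(1) have "?s \<le> r"
      by (rule next_smaller_le)
    then have s: "?s < t" "?s < length tau" "p \<le> ?s"
      using that t first_after_gt[of p "length tau" "\<lambda>t. tau!t < tau!p"]
      unfolding next_smaller_def by auto
    show False
    proof (cases "lr_min tau ?s")
      case False
      then have "pop_time_23_1 tau p = ?s"
        using pop_time_23_1_eqI s(2) by blast
      with p s show False by simp
    next
      case True
      then have "tau!t < tau!?s"
        using H s pop_time_23_1_lr_min[OF dist True] t by auto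
      moreover have "\<not> q0 < ?s"
        using True \<open>tau!t < tau!?s\<close> q0(3) unfolding lr_min_def by (meson less_trans not_less_iff_gr_or_eq)
      ultimately show False
        using H[rule_format, of q0] q0 s by simp
    qed
  qed
  have "?s = t"
    unfolding next_smaller_def
  proof (rule first_after_eqI)
    show "p < t" "t \<le> length tau" "tau!t < tau!p"
      using p t \<open>tau!t < tau!p\<close> by simp_all
  qed (use between in blast)
  moreover have "\<not> lr_min tau t"
    using q0 unfolding lr_min_def by auto
  ultimately show "pop_time_23_1 tau p = t"
    using pop_time_23_1_eqI t by blast
qed

lemma pop_time_23_1_neq_if_no_smaller:
  assumes dist: "distinct tau" and t: "t < length tau"
    and H: "\<forall>q. q < t \<and> t \<le> pop_time_23_1 tau q \<longrightarrow> tau!t < tau!q"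
  shows "pop_time_23_1 tau p \<noteq> t"
proof
  assume "pop_time_23_1 tau p = t"
  then have "\<not> lr_min tau t"
    using pop_time_23_1_less t by metis
  then obtain e where e: "e < t" "tau!e < tau!t"
    using not_lr_min_witness[OF dist t] by blast
  then obtain i where i: "i < Suc e" "lr_min tau i" "tau!i \<le> tau!e"
    using prefix_min_lr_min[of "Suc e" tau] t by auto
  then have "tau!t < tau!i"
    using H pop_time_23_1_lr_min[OF dist] e t by auto
  with e i show False by simp
qed

lemma sc_insert_23_1_stack_at:
  assumes dist: "distinct tau" and t: "t < length tau"
    and avoids: "\<not> contains_23_1 (stack_at tau (pop_time_23_1 tau) t)"
  shows "sc_insert contains_23_1 (tau!t) (stack_at tau (pop_time_23_1 tau) t) out =
    (stack_at tau (pop_time_23_1 tau) (Suc t), out @ map ((!) tau) (popped_positions (pop_time_23_1 tau) t))"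
proof -
  let ?T = "pop_time_23_1 tau"
  have "t < ?T t"
    using pop_time_23_1_bounds t by blast
  show ?thesis
  proof (cases "\<exists>z\<in>set (stack_at tau ?T t). z < tau!t")
    case True
    then obtain q0 where "q0 < t" "t \<le> ?T q0" "tau!q0 < tau!t"
      unfolding set_stack_at by auto
    then have "takeWhile (\<lambda>y. tau!t < y) (stack_at tau ?T t) = map ((!) tau) (popped_positions ?T t)"
      and "tau!t # dropWhile (\<lambda>y. tau!t < y) (stack_at tau ?T t) = stack_at tau ?T (Suc t)"
      using pop_time_23_1_eq_iff[OF dist t] stack_at_step[of t ?T "\<lambda>y. tau!t < y" tau] \<open>t < ?T t\<close>
      by blast+
    with True show ?thesis
      unfolding sc_insert_23_1[OF avoids] by simp
  next
    case False
    have "tau!t < tau!q" if "q < t" "t \<le> ?T q" for q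
    proof -
      have "\<not> tau!q < tau!t"
        using False that unfolding set_stack_at by auto
      moreover have "tau!q \<noteq> tau!t"
        using distinct_nth_neq[OF dist, of q t] that t by simp
      ultimately show ?thesis by simp
    qed
    then have none: "?T p \<noteq> t" for p
      using pop_time_23_1_neq_if_no_smaller[OF dist t] by blast
    then have "popped_positions ?T t = []"
      unfolding popped_positions_def by simp
    moreover have "tau!t # stack_at tau ?T t = stack_at tau ?T (Suc t)"
      using stack_at_step(2)[of t ?T "\<lambda>_. False" tau] \<open>t < ?T t\<close> none by (simp, metis order_refl)
    ultimately show ?thesis
      using False unfolding sc_insert_23_1[OF avoids] by simp
  qed
qed

lemma SC_23_1_eq_map_pop_order:
  "distinct tau \<Longrightarrow>
     SC contains_23_1 tau = map ((!) tau) (pop_order (pop_time_23_1 tau) (Suc (length tau)))"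
  by (rule SC_eq_map_pop_order)
    (auto simp: contains_23_1_def pop_time_23_1_bounds sc_insert_23_1_stack_at)

section \<open>West's stack-sorting map\<close>

lemma next_greater_eq_iff:
  assumes dist: "distinct tau" and t: "t < length tau" and p: "p < t" "t \<le> next_greater tau p"
  shows "next_greater tau p = t \<longleftrightarrow>
    (\<forall>q. p \<le> q \<and> q < t \<and> t \<le> next_greater tau q \<longrightarrow> tau!q < tau!t)"
proof -
  have below: "tau!q < tau!p" if "p < q" "q < t" for q
    using next_greater_between[OF dist that(1)] that(2) p(2) by simp
  have "next_greater tau p = t \<longleftrightarrow> tau!p < tau!t"
  proof
    assume "next_greater tau p = t"
    then show "tau!p < tau!t"
      using next_greater_less[of tau p] t by simp
  next
    assume "tau!p < tau!t"
    then show "next_greater tau p = t"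
      unfolding next_greater_def using p(1) t below
      by (intro first_after_eqI) (auto dest: less_asym)
  qed
  also have "\<dots> \<longleftrightarrow> (\<forall>q. p \<le> q \<and> q < t \<and> t \<le> next_greater tau q \<longrightarrow> tau!q < tau!t)"
    using p below by (auto simp: le_less intro: less_trans)
  finally show ?thesis .
qed

lemma sc_insert_21_stack_at:
  assumes dist: "distinct tau" and t: "t < length tau"
    and avoids: "\<not> contains [2, 1] (stack_at tau (next_greater tau) t)"
  shows "sc_insert (contains [2, 1]) (tau!t) (stack_at tau (next_greater tau) t) out =
    (stack_at tau (next_greater tau) (Suc t), out @ map ((!) tau) (popped_positions (next_greater tau) t))"
proof -
  have "t < next_greater tau t"
    using next_greater_bounds t by blast
  then have "takeWhile (\<lambda>y. y < tau!t) (stack_at tau (next_greater tau) t) =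
      map ((!) tau) (popped_positions (next_greater tau) t)"
    and "tau!t # dropWhile (\<lambda>y. y < tau!t) (stack_at tau (next_greater tau) t) =
      stack_at tau (next_greater tau) (Suc t)"
    using next_greater_eq_iff[OF dist t] stack_at_step[of t "next_greater tau" "\<lambda>y. y < tau!t" tau]
    by blast+
  then show ?thesis
    unfolding sc_insert_21[OF avoids] by simp
qed

lemma west_s_eq_map_pop_order:
  "distinct tau \<Longrightarrow> west_s tau = map ((!) tau) (pop_order (next_greater tau) (Suc (length tau)))"
  unfolding west_s_def
proof (rule SC_eq_map_pop_order)
  show "\<not> contains [2, 1] []" and "\<And>y. \<not> contains [2, 1] [y]"
    unfolding contains_21_iff by auto
qed (use next_greater_bounds sc_insert_21_stack_at in blast)+

lemma increasing_in_pop_order_if_avoids_231: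
  assumes dist: "distinct tau" and avoids: "\<not> contains [2, 3, 1] tau"
    and pq: "p < length tau" "q < length tau" and before: "pops_before (next_greater tau) p q"
  shows "tau!p < tau!q"
proof (rule ccontr)
  let ?g = "next_greater tau"
  assume "\<not> tau!p < tau!q"
  moreover have "p \<noteq> q"
    using before pops_before_asym by blast
  ultimately have qp: "tau!q < tau!p"
    using distinct_nth_neq[OF dist pq] by simp
  consider "p < q" "?g p < q" | "p < q" "?g p = q" | "p < q" "q < ?g p" | "q < p"
    using \<open>p \<noteq> q\<close> linorder_neqE_nat by blast
  then show False
  proof cases
    case 1
    then have "p < ?g p" "tau!p < tau!(?g p)"
      using next_greater_less[of tau p] pq by simp_all
    with 1 qp pq have "contains [2, 3, 1] tau"
      unfolding contains_231_iff by (intro exI[of _ p] exI[of _ "?g p"] exI[of _ q]) simp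
    with avoids show False ..
  next
    case 2
    then show False
      using next_greater_less[of tau p] pq qp by simp
  next
    case 3
    have "?g q \<le> ?g p"
    proof (cases "?g p < length tau")
      case True
      then show ?thesis
        using next_greater_le[OF 3(2)] next_greater_less[of tau p] qp by simp
    qed (use next_greater_bounds[OF pq(2)] in simp)
    with before 3(1) show False
      unfolding pops_before_def by simp
  next
    case 4
    then have "?g q < ?g p"
      using next_greater_le[OF 4 qp] next_greater_bounds[OF pq(1)] by simp
    with before show False
      unfolding pops_before_def by simp
  qed
qed

lemma increasing_in_pop_order_iff_avoids_231:
  assumes dist: "distinct tau"
  shows "(\<forall>p<length tau. \<forall>q<length tau. pops_before (next_greater tau) p q \<longrightarrow> tau!p < tau!q) \<longleftrightarrow>
    \<not> contains [2, 3, 1] tau"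
proof
  assume H: "\<forall>p<length tau. \<forall>q<length tau. pops_before (next_greater tau) p q \<longrightarrow> tau!p < tau!q"
  show "\<not> contains [2, 3, 1] tau"
  proof
    assume "contains [2, 3, 1] tau"
    then obtain i j k where ijk: "i < j" "j < k" "k < length tau" "tau!k < tau!i" "tau!i < tau!j"
      unfolding contains_231_iff by blast
    then have "next_greater tau i < next_greater tau k"
      using next_greater_le[of i j tau] next_greater_bounds[of k tau] by simp
    then have "pops_before (next_greater tau) i k"
      unfolding pops_before_def by simp
    moreover have "i < length tau"
      using ijk by simp
    ultimately show False
      using H[rule_format, of i k] ijk by simp
  qed
qed (use increasing_in_pop_order_if_avoids_231[OF dist] in blast)

lemma perms_length: "tau \<in> perms n \<Longrightarrow> length tau = n"
  unfolding perms_def by (metis (mono_tags) card_atLeastAtMost diff_Suc_1 distinct_card mem_Collect_eq)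

lemma perms_eq_upt_iff_sorted: "w \<in> perms n \<Longrightarrow> w = [1..<n + 1] \<longleftrightarrow> sorted_wrt (<) w"
  unfolding perms_def
  by (metis (mono_tags) Suc_eq_plus1 atLeastLessThanSuc_atLeastAtMost distinct_upt mem_Collect_eq
      set_upt sorted_distinct_set_unique sorted_upt sorted_wrt_upt strict_sorted_iff)

lemma map_nth_perms:
  assumes "tau \<in> perms n" and "distinct Q" and "set Q = {0..<n}"
  shows "map ((!) tau) Q \<in> perms n"
proof -
  have "length tau = n" "distinct tau" "set tau = {1..n}"
    using assms(1) perms_length unfolding perms_def by auto
  then show ?thesis
    using assms(2,3) unfolding perms_def by (auto simp: distinct_map inj_on_nth image_set[symmetric] nth_image)
qed

theorem west_s_sorts_iff_avoids_231:
  assumes "w \<in> perms n"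
  shows "west_s w = [1..<n + 1] \<longleftrightarrow> \<not> contains [2, 3, 1] w"
proof -
  let ?Q = "pop_order (next_greater w) (Suc n)"
  have dist: "distinct w" and len: "length w = n"
    using assms perms_length unfolding perms_def by auto
  have Q: "distinct ?Q" "set ?Q = {0..<n}" "sorted_wrt (pops_before (next_greater w)) ?Q"
    using pop_order_props set_pop_order_complete next_greater_bounds len by blast+
  have "west_s w = map ((!) w) ?Q"
    using west_s_eq_map_pop_order[OF dist] len by simp
  moreover have "map ((!) w) ?Q \<in> perms n"
    using map_nth_perms assms Q by blast
  ultimately have "west_s w = [1..<n + 1] \<longleftrightarrow> sorted_wrt (<) (map ((!) w) ?Q)"
    using perms_eq_upt_iff_sorted by simp
  also have "\<dots> \<longleftrightarrow> (\<forall>p<n. \<forall>q<n. pops_before (next_greater w) p q \<longrightarrow> w!p < w!q)"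
    using sorted_map_iff_rel[OF Q(3) pops_before_asym] Q(2) by (simp add: Ball_def)
  also have "\<dots> \<longleftrightarrow> \<not> contains [2, 3, 1] w"
    using increasing_in_pop_order_iff_avoids_231[OF dist] len by simp
  finally show ?thesis .
qed

section \<open>Triples leaving the 23-1 stack as a 231\<close>

lemma SC_23_1_perms:
  assumes "tau \<in> perms n"
  shows "SC contains_23_1 tau \<in> perms n"
proof -
  let ?Q = "pop_order (pop_time_23_1 tau) (Suc (length tau))"
  have "distinct tau" "length tau = n"
    using assms perms_length unfolding perms_def by auto
  moreover have "distinct ?Q" "set ?Q = {0..<length tau}"
    using pop_order_props set_pop_order_complete pop_time_23_1_bounds by blast+
  ultimately show ?thesis
    using SC_23_1_eq_map_pop_order map_nth_perms[OF assms] by simp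
qed

definition popped_231 :: "nat list \<Rightarrow> bool" where
  "popped_231 tau \<longleftrightarrow> (\<exists>a<length tau. \<exists>b<length tau. \<exists>c<length tau.
     pops_before (pop_time_23_1 tau) b c \<and> pops_before (pop_time_23_1 tau) c a \<and>
     tau!a < tau!b \<and> tau!b < tau!c)"

lemma contains_231_SC_23_1_iff:
  assumes "distinct tau"
  shows "contains [2, 3, 1] (SC contains_23_1 tau) \<longleftrightarrow> popped_231 tau"
proof -
  let ?Q = "pop_order (pop_time_23_1 tau) (Suc (length tau))"
  have "set ?Q = {0..<length tau}" "sorted_wrt (pops_before (pop_time_23_1 tau)) ?Q"
    using pop_order_props set_pop_order_complete pop_time_23_1_bounds by blast+
  then show ?thesis
    unfolding SC_23_1_eq_map_pop_order[OF assms] popped_231_def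
    using contains_231_map_iff[of _ ?Q "(!) tau"] pops_before_asym by (simp add: Bex_def)
qed

lemma lr_min_next_smaller_if_prefix_greater:
  assumes dist: "distinct tau" and t: "next_smaller tau j = t" "t < length tau"
    and before: "\<forall>e<j. tau!t < tau!e"
  shows "lr_min tau t"
  unfolding lr_min_def
proof (intro allI impI)
  fix e assume "e < t"
  have "j < t" "tau!t < tau!j"
    using next_smaller_less[of tau j] t by simp_all
  then consider "e < j" | "e = j" | "j < e" "e < t"
    using \<open>e < t\<close> by fastforce
  then show "tau!t < tau!e"
  proof cases
    case 3
    then show ?thesis
      using next_smaller_between[OF dist, of j e] t \<open>tau!t < tau!j\<close> by simp
  qed (use before \<open>tau!t < tau!j\<close> in simp_all)
qed

lemma lr_min_next_smaller_if_never_popped: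
  "pop_time_23_1 tau p = length tau \<Longrightarrow> next_smaller tau p < length tau \<Longrightarrow>
     lr_min tau (next_smaller tau p)"
  unfolding pop_time_23_1_def Let_def by (auto split: if_splits)

lemma pops_before_if_never_popped:
  "pop_time_23_1 tau c = length tau \<Longrightarrow> c < b \<Longrightarrow> b < length tau \<Longrightarrow>
     pops_before (pop_time_23_1 tau) b c"
  unfolding pops_before_def using pop_time_23_1_bounds[of b tau] by auto

lemma pops_before_if_popped_earlier:
  "pop_time_23_1 tau b < c \<Longrightarrow> c < length tau \<Longrightarrow> pops_before (pop_time_23_1 tau) b c"
  unfolding pops_before_def using pop_time_23_1_bounds[of c tau] by auto

lemma popped_231I:
  assumes "distinct tau" "a < c" "c < length tau" "b < length tau" "lr_min tau a"
    and "pops_before (pop_time_23_1 tau) b c" "tau!a < tau!b" "tau!b < tau!c"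
  shows "popped_231 tau"
proof -
  have "pops_before (pop_time_23_1 tau) c a"
    using pop_time_23_1_lr_min[OF assms(1,5)] pop_time_23_1_bounds[of c tau] assms(2,3)
    unfolding pops_before_def by auto
  with assms show ?thesis
    unfolding popped_231_def by (meson less_trans)
qed

lemma popped_231_of_1324:
  assumes dist: "distinct tau"
    and "i < j" "j < k" "k < l" "l < length tau" "tau!i < tau!k" "tau!k < tau!j" "tau!j < tau!l"
  shows "popped_231 tau"
proof -
  obtain m where m: "m < j" "lr_min tau m" "\<forall>p<j. tau!m \<le> tau!p"
    using prefix_min_lr_min[of j tau] assms by auto
  then have "tau!m < tau!k"
    using assms by (meson le_less_trans)
  let ?t = "next_smaller tau j"
  have "?t \<le> k"
    using assms by (intro next_smaller_le)
  show ?thesis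
  proof (cases "lr_min tau ?t")
    case True
    then have "pop_time_23_1 tau j = length tau"
      unfolding pop_time_23_1_def by simp
    then show ?thesis
      using assms m \<open>tau!m < tau!k\<close> pops_before_if_never_popped
      by (intro popped_231I[of tau m j k]) auto
  next
    case False
    then have "pop_time_23_1 tau j = ?t"
      using \<open>?t \<le> k\<close> assms pop_time_23_1_eqI by simp
    then show ?thesis
      using assms m \<open>tau!m < tau!k\<close> \<open>?t \<le> k\<close> pops_before_if_popped_earlier
      by (intro popped_231I[of tau m l j]) auto
  qed
qed

lemma popped_231_of_mesh_chain:
  assumes dist: "distinct tau" and "m < j" "j < k" "k < l" "l < length tau" "lr_min tau m"
    and "\<forall>p<j. tau!m \<le> tau!p" "tau!k < tau!m" "tau!m < tau!l" "tau!l < tau!j"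
    and "\<forall>p. j < p \<and> p < k \<longrightarrow> tau!p < tau!k \<or> tau!l < tau!p"
  shows "popped_231 tau"
  \<comment> \<open>move j to its next smaller entry until that entry is a left-to-right minimum\<close>
  using assms(2-)
proof (induction "k - j" arbitrary: j rule: less_induct)
  case less
  note prems = less.prems
  let ?t = "next_smaller tau j"
  have "?t \<le> k"
    using prems(2,7,8,9) by (intro next_smaller_le) auto
  then have t: "?t < length tau" "j < ?t" "tau!?t < tau!j"
    using prems(3,4) next_smaller_less[of tau j] by auto
  show ?case
  proof (cases "lr_min tau ?t")
    case True
    then have "pop_time_23_1 tau j = length tau"
      unfolding pop_time_23_1_def by simp
    then show ?thesis
      using prems pops_before_if_never_popped[of tau j l]
      by (intro popped_231I[OF dist, of m j l]) auto
  next
    case False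
    then have "\<not> (\<forall>e<j. tau!?t < tau!e)"
      using lr_min_next_smaller_if_prefix_greater[OF dist refl t(1)] by blast
    then obtain e where e: "e < j" "tau!e \<le> tau!?t"
      by (auto simp: not_less)
    then have "tau!k < tau!?t"
      using prems(6,7) by (meson le_less_trans less_le_trans)
    then have t_k: "?t < k" "tau!l < tau!?t"
      using \<open>?t \<le> k\<close> prems(10) t(2) by (auto simp: le_less)
    have "tau!m \<le> tau!p" if "p < ?t" for p
    proof -
      consider "p < j" | "p = j" | "j < p" by fastforce
      then show ?thesis
      proof cases
        case 3
        then have "tau!j < tau!p"
          using next_smaller_between[OF dist, of j p] that by simp
        then show ?thesis
          using prems(8,9) by simp
      qed (use prems(6,8,9) in simp_all)
    qed
    then show ?thesis
      using prems t t_k by (intro less.hyps[of ?t]) simp_all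
  qed
qed

lemma popped_231_of_mesh:
  assumes dist: "distinct tau" and "mesh_2413_occurrence tau i j k l"
  shows "popped_231 tau"
proof -
  have ord: "i < j" "j < k" "k < l" "l < length tau" "tau!k < tau!i" "tau!i < tau!l" "tau!l < tau!j"
    and box10: "\<forall>p. i < p \<and> p < j \<longrightarrow> tau!k < tau!p"
    and box2: "\<forall>p. j < p \<and> p < k \<longrightarrow> tau!p < tau!k \<or> tau!l < tau!p"
    using assms(2) unfolding mesh_2413_occurrence_def occurrence_2413 by auto
  obtain m where m: "m < j" "lr_min tau m" "\<forall>p<j. tau!m \<le> tau!p"
    using prefix_min_lr_min[of j tau] ord by auto
  show ?thesis
  proof (cases "tau!m < tau!k")
    case True
    then have "m < i"
      using m box10 ord by (metis not_less_iff_gr_or_eq order.asym)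
    then show ?thesis
      using popped_231_of_1324[OF dist, of m i k l] True ord by simp
  next
    case False
    then have "tau!k < tau!m"
      using distinct_nth_neq[OF dist, of m k] m ord by auto
    then show ?thesis
      using popped_231_of_mesh_chain[OF dist, of m j k l] ord box2 m by auto
  qed
qed

lemma contains_1324_if_pop_time_less:
  assumes dist: "distinct tau" and "pop_time_23_1 tau b < c" "c < length tau" "tau!b < tau!c"
  shows "contains [1, 3, 2, 4] tau"
proof -
  let ?t = "pop_time_23_1 tau b"
  have t: "next_smaller tau b = ?t" "\<not> lr_min tau ?t" "?t < length tau"
    using pop_time_23_1_less[of tau b] assms by auto
  then have "b < ?t" "tau!?t < tau!b"
    using next_smaller_less[of tau b] by auto
  obtain e where e: "e < ?t" "tau!e < tau!?t"
    using not_lr_min_witness[OF dist t(3,2)] by blast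
  have "e < b"
  proof (rule ccontr)
    assume "\<not> e < b"
    then have "e = b \<or> b < e"
      by auto
    then show False
      using e \<open>tau!?t < tau!b\<close> next_smaller_between[OF dist, of b e] t(1) by auto
  qed
  then show ?thesis
    unfolding contains_1324_iff using e \<open>b < ?t\<close> \<open>tau!?t < tau!b\<close> assms
    by (intro exI[of _ e] exI[of _ b] exI[of _ ?t] exI[of _ c]) auto
qed

lemma pop_time_23_1_less_if_popped:
  assumes dist: "distinct tau" and "b < length tau" "pop_time_23_1 tau c < length tau"
    and before: "pops_before (pop_time_23_1 tau) b c" and "tau!b < tau!c"
  shows "pop_time_23_1 tau b < c"
proof -
  let ?T = "pop_time_23_1 tau"
  have "?T b \<le> ?T c"
    using before unfolding pops_before_def by auto
  then have tc: "next_smaller tau c = ?T c" and tb: "next_smaller tau b = ?T b" "?T b < length tau"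
    using pop_time_23_1_less assms(3) by (metis le_less_trans)+
  then have "b < ?T b" "tau!?T b < tau!b"
    using next_smaller_less[of tau b] by auto
  have "b < c"
  proof (rule ccontr)
    assume "\<not> b < c"
    then have "c < b"
      using assms(5) by (metis linorder_neqE_nat order.irrefl)
    then show False
      using next_smaller_between[OF dist, of c b] tc \<open>b < ?T b\<close> \<open>?T b \<le> ?T c\<close> assms(5) by simp
  qed
  show "?T b < c"
  proof (rule ccontr)
    assume "\<not> ?T b < c"
    then have "c < ?T b"
      using \<open>tau!?T b < tau!b\<close> assms(5) by (metis linorder_neqE_nat order.asym)
    then have "?T c \<le> ?T b"
      using next_smaller_le[of c "?T b" tau] tc \<open>tau!?T b < tau!b\<close> assms(5) by simp
    then show False
      using before \<open>b < c\<close> \<open>?T b \<le> ?T c\<close> unfolding pops_before_def by simp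
  qed
qed

lemma pop_time_23_1_less_if_never_popped:
  assumes dist: "distinct tau" and "a < c" "b < c" "c < length tau"
    and "pop_time_23_1 tau c = length tau" "pop_time_23_1 tau b < length tau"
    and "tau!a < tau!b" "tau!b < tau!c"
  shows "pop_time_23_1 tau b < c"
proof (rule ccontr)
  let ?T = "pop_time_23_1 tau" and ?d = "next_smaller tau c"
  assume "\<not> ?T b < c"
  have tb: "next_smaller tau b = ?T b" "\<not> lr_min tau (?T b)"
    using pop_time_23_1_less assms(6) by blast+
  then have "tau!?T b < tau!b"
    using next_smaller_less[of tau b] assms(6) by simp
  then have "c < ?T b"
    using \<open>\<not> ?T b < c\<close> assms(8) by (metis linorder_neqE_nat order.asym)
  then have "?d \<le> ?T b"
    using next_smaller_le[of c "?T b" tau] \<open>tau!?T b < tau!b\<close> assms(8) by simp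
  then have d: "?d < length tau" "lr_min tau ?d" "c < ?d"
    using assms(5,6) lr_min_next_smaller_if_never_popped next_smaller_less[of tau c] by fastforce+
  then have "?d < ?T b"
    using \<open>?d \<le> ?T b\<close> tb(2) by (metis le_neq_implies_less)
  then have "tau!b < tau!?d"
    using next_smaller_between[OF dist, of b ?d] tb(1) assms(3) d(3) by simp
  moreover have "tau!?d < tau!a"
    using d assms(2) unfolding lr_min_def by simp
  ultimately show False
    using assms(7) by simp
qed

lemma mesh_2413_if_never_popped:
  assumes dist: "distinct tau" and "a < c" "c < b" "b < length tau"
    and "pop_time_23_1 tau c = length tau" "tau!a < tau!b" "tau!b < tau!c"
  shows "\<exists>i j k l. mesh_2413_occurrence tau i j k l"
proof -
  let ?d = "next_smaller tau c"
  have "?d \<le> b"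
    using next_smaller_le[of c b tau] assms(3,7) by simp
  then have d: "?d < length tau" "lr_min tau ?d" "c < ?d"
    using assms(4,5) lr_min_next_smaller_if_never_popped next_smaller_less[of tau c] by fastforce+
  have "\<not> lr_min tau b"
    using assms(2,3,6) unfolding lr_min_def by (meson less_trans not_less_iff_gr_or_eq)
  then have "?d < b"
    using \<open>?d \<le> b\<close> d(2) by (metis le_neq_implies_less)
  moreover have "tau!?d < tau!a"
    using d assms(2) unfolding lr_min_def by simp
  moreover have "\<forall>p. a < p \<and> p < c \<longrightarrow> tau!?d < tau!p"
    using d assms(2) unfolding lr_min_def by simp
  moreover have "\<forall>p. c < p \<and> p < ?d \<longrightarrow> tau!p < tau!?d \<or> tau!b < tau!p"
    using next_smaller_between[OF dist, of c] assms(7) by (meson less_trans)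
  ultimately show ?thesis
    unfolding mesh_2413_occurrence_def occurrence_2413 using assms d by (intro exI[of _ a] exI[of _ c] exI[of _ ?d] exI[of _ b]) auto
qed

lemma popped_231_imp_1324_or_mesh:
  assumes dist: "distinct tau" and "popped_231 tau"
  shows "contains [1, 3, 2, 4] tau \<or> (\<exists>i j k l. mesh_2413_occurrence tau i j k l)"
proof -
  let ?T = "pop_time_23_1 tau"
  obtain a b c where abc: "a < length tau" "b < length tau" "c < length tau"
    and bc: "pops_before ?T b c" and ca: "pops_before ?T c a" and v: "tau!a < tau!b" "tau!b < tau!c"
    using assms(2) unfolding popped_231_def by blast
  have "?T c \<le> length tau"
    using pop_time_23_1_bounds abc(3) by blast
  then consider "?T c < length tau" | "?T c = length tau"
    by fastforce
  then show ?thesis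
  proof cases
    case 1
    then show ?thesis
      using pop_time_23_1_less_if_popped[OF dist abc(2) 1 bc v(2)] contains_1324_if_pop_time_less dist abc v
      by blast
  next
    case never: 2
    then have "a < c"
      using ca pop_time_23_1_bounds[OF abc(1)] unfolding pops_before_def by auto
    consider "c < b" | "b < c"
      using v by (metis linorder_neqE_nat order.irrefl)
    then show ?thesis
    proof cases
      case 1
      then show ?thesis
        using mesh_2413_if_never_popped[OF dist \<open>a < c\<close> 1 abc(2) never v] by blast
    next
      case 2
      then have "?T b < length tau"
        using bc never pop_time_23_1_bounds[OF abc(2)] unfolding pops_before_def by auto
      then show ?thesis
        using pop_time_23_1_less_if_never_popped[OF dist \<open>a < c\<close> 2 abc(3) never _ v]
          contains_1324_if_pop_time_less dist abc v by blast
    qed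
  qed
qed

lemma popped_231_iff_1324_or_mesh:
  assumes "distinct tau"
  shows "popped_231 tau \<longleftrightarrow> contains [1, 3, 2, 4] tau \<or> (\<exists>i j k l. mesh_2413_occurrence tau i j k l)"
proof
  assume "contains [1, 3, 2, 4] tau \<or> (\<exists>i j k l. mesh_2413_occurrence tau i j k l)"
  then show "popped_231 tau"
  proof
    assume "contains [1, 3, 2, 4] tau"
    then show ?thesis
      unfolding contains_1324_iff using popped_231_of_1324[OF assms] by blast
  qed (use popped_231_of_mesh[OF assms] in blast)
qed (rule popped_231_imp_1324_or_mesh[OF assms])

theorem mainTheorem9:
  fixes n :: nat
  assumes "n \<ge> 1"
  shows "Sort_SC n contains_23_1 =
    {tau \<in> perms n. \<not> contains [1, 3, 2, 4] tau \<and>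
                     \<not> mesh_contains [2, 4, 1, 3] {(1, 0), (2, 1), (2, 2)} tau}"
proof -
  have "west_s (SC contains_23_1 tau) = [1..<n + 1] \<longleftrightarrow>
      \<not> contains [1, 3, 2, 4] tau \<and> \<not> mesh_contains [2, 4, 1, 3] {(1, 0), (2, 1), (2, 2)} tau"
    if tau: "tau \<in> perms n" for tau
  proof -
    have dist: "distinct tau" and pos: "0 \<notin> set tau"
      using tau unfolding perms_def by auto
    have "west_s (SC contains_23_1 tau) = [1..<n + 1] \<longleftrightarrow> \<not> contains [2, 3, 1] (SC contains_23_1 tau)"
      using SC_23_1_perms[OF tau] by (rule west_s_sorts_iff_avoids_231)
    also have "\<dots> \<longleftrightarrow> \<not> popped_231 tau"
      using contains_231_SC_23_1_iff[OF dist] by simp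
    also have "\<dots> \<longleftrightarrow> \<not> contains [1, 3, 2, 4] tau \<and>
        \<not> mesh_contains [2, 4, 1, 3] {(1, 0), (2, 1), (2, 2)} tau"
      using popped_231_iff_1324_or_mesh[OF dist] mesh_contains_2413_iff[OF dist pos] by simp
    finally show ?thesis .
  qed
  then show ?thesis
    unfolding Sort_SC_def by blast
qed

end
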